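(* Let $z=(z_1,\dots,z_n)$ with $z_i$ i.i.d. from a continuous distribution on $\mathbb{R}$ with a density, let $J\le\sqrt{n}$, and let $Q(\tau,\mu,z)=-\sum_{i=1}^n\log\sum_{j=1}^J\tau_j\phi(z_i-\mu_j)$, where $\phi$ is the standard normal density. Consider the unrestricted parameter space $\mathcal{U}=\{(\tau,\mu)\in\mathbb{R}^J\times\mathbb{R}^J:\tau_j>0,\ \sum_j\tau_j=1\}$ (no ordering restriction on $\mu$). Then for almost every $z$ the following holds: if $(\tau^*,\mu^* )\in\mathcal{U}$ is a global minimizer of $Q(\cdot,\cdot,z)$ over $\mathcal{U}$, then the set of global minimizers of $Q(\cdot,\cdot,z)$ over $\mathcal{U}$ equals $$\Big\{(\varsigma^*,\nu^* )\in\mathcal{U}:\ \sum_{j=1}^J\varsigma_j^*\mathbf{1}\{\nu_j^*=\mu_k^*\}=\sum_{j=1}^J\tau_j^*\mathbf{1}\{\mu_j^*=\mu_k^*\}\ \text{for all }k=1,\dots,J\Big\}.$$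
   Context: $\phi$ is the standard normal density; $\mathbf{1}\{\cdot\}$ is the indicator function. *)

theory Defs
  imports "HOL-Probability.Probability"
begin

definition Qmix :: "nat \<Rightarrow> nat \<Rightarrow> (nat \<Rightarrow> real) \<Rightarrow> (nat \<Rightarrow> real) \<Rightarrow> (nat \<Rightarrow> real) \<Rightarrow> real" where
  "Qmix n J tau mu z =
     - (\<Sum>i<n. ln (\<Sum>j<J. tau j * std_normal_density (z i - mu j)))"

text \<open>Unrestricted parameter space U, a copy of a subset of R^J x R^J:
  parameters are functions on nat, extensional (zero) outside the indices 0..J-1.\<close>
definition param_space :: "nat \<Rightarrow> ((nat \<Rightarrow> real) \<times> (nat \<Rightarrow> real)) set" where
  "param_space J = {(tau, mu). (\<forall>j<J. tau j > 0) \<and> (\<Sum>j<J. tau j) = 1 \<and>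
                               (\<forall>j\<ge>J. tau j = 0 \<and> mu j = 0)}"

definition global_minimizers ::
  "nat \<Rightarrow> nat \<Rightarrow> (nat \<Rightarrow> real) \<Rightarrow> ((nat \<Rightarrow> real) \<times> (nat \<Rightarrow> real)) set" where
  "global_minimizers n J z =
     {(tau, mu) \<in> param_space J. \<forall>(s, v) \<in> param_space J. Qmix n J tau mu z \<le> Qmix n J s v z}"

end

theory Submission
  imports Defs
begin

text \<open>Minimising Q is maximising the log-likelihood L(z) = \<Sum>i ln A(z i), where A is the mixture
  density divided by the standard normal density. For each coordinate, the maximal value W of L
  is a supremum of convex functions of z i, hence convex, and the score A'/A at z i of any
  maximiser is a subgradient of W there. A convex function has only countably many kinks, so
  almost surely all maximisers share their scores at the n \<ge> J * J distinct data points. Then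
  A1' A2 - A1 A2' is an exponential sum with at most J * J frequencies and at least
  n zeros, so it vanishes identically (Rolle); hence A1 / A2 is constant, and comparing
  exponential sums once more shows that the two mixing distributions coincide.\<close>

lemma Rolle_finite_zeros:
  fixes h h' :: "real \<Rightarrow> real"
  assumes der: "\<And>x. (h has_real_derivative h' x) (at x)"
    and "finite Z" and "\<forall>z\<in>Z. h z = 0"
  shows "\<exists>Z'. finite Z' \<and> card Z \<le> Suc (card Z') \<and> (\<forall>x\<in>Z'. h' x = 0) \<and> (\<forall>x\<in>Z'. \<exists>z\<in>Z. x < z)"
  using \<open>finite Z\<close> \<open>\<forall>z\<in>Z. h z = 0\<close>
proof (induction Z rule: finite_linorder_max_induct)
  case empty
  then show ?case by auto
next
  case (insert b A)
  show ?case
  proof (cases "A = {}")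
    case True
    then show ?thesis by (intro exI[of _ "{}"]) auto
  next
    case False
    from insert obtain Z0 where Z0: "finite Z0" "card A \<le> Suc (card Z0)"
      "\<forall>x\<in>Z0. h' x = 0" "\<forall>x\<in>Z0. \<exists>z\<in>A. x < z" by auto
    define a where "a = Max A"
    have "a \<in> A" "a < b" using False insert.hyps a_def by auto
    moreover have "continuous_on {a..b} h"
      using der by (meson DERIV_continuous continuous_at_imp_continuous_on)
    ultimately obtain \<xi> where \<xi>: "a < \<xi>" "\<xi> < b" "DERIV h \<xi> :> 0"
      using Rolle[of a b h] insert.prems der real_differentiable_def by fastforce
    have "h' \<xi> = 0" using DERIV_unique[OF der \<xi>(3)] .
    moreover have "\<xi> \<notin> Z0"
    proof
      assume "\<xi> \<in> Z0"
      then obtain z where "z \<in> A" "\<xi> < z" using Z0(4) by auto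
      then show False using Max_ge[OF insert.hyps(1), of z] \<xi>(1) by (simp add: a_def)
    qed
    ultimately show ?thesis using Z0 \<xi> insert.hyps
      by (intro exI[of _ "insert \<xi> Z0"]) (auto simp: card_insert_if)
  qed
qed

text \<open>Dividing by the exponential of one frequency and differentiating removes that frequency
  and, by Rolle's theorem, costs at most one zero.\<close>
lemma exp_sum_coeff_eq_0:
  fixes c :: "real \<Rightarrow> real"
  assumes "finite B" "finite Z" "card B \<le> card Z"
    and "\<forall>x\<in>Z. (\<Sum>b\<in>B. c b * exp (b * x)) = 0"
    and "\<beta> \<in> B"
  shows "c \<beta> = 0"
  using assms
proof (induction "card B" arbitrary: B c Z \<beta>)
  case 0
  then show ?case by auto
next
  case (Suc m)
  define B1 where "B1 = B - {\<beta>}"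
  have B: "B = insert \<beta> B1" "\<beta> \<notin> B1" "finite B1" "card B1 = m"
    using Suc.prems Suc.hyps(2) by (auto simp: B1_def)
  define h where "h x = c \<beta> + (\<Sum>b\<in>B1. c b * exp ((b - \<beta>) * x))" for x
  define h' where "h' x = (\<Sum>b\<in>B1. c b * (b - \<beta>) * exp ((b - \<beta>) * x))" for x
  have der: "(h has_real_derivative h' x) (at x)" for x
    unfolding h_def h'_def by (auto intro!: derivative_eq_intros simp: algebra_simps)
  have "h z = exp (- \<beta> * z) * (\<Sum>b\<in>B. c b * exp (b * z))" for z
    unfolding h_def B(1) using B(2,3)
    by (simp add: sum_distrib_left algebra_simps flip: exp_add)
  then have "\<forall>z\<in>Z. h z = 0" using Suc.prems(4) by simp
  then obtain Z0 where Z0: "finite Z0" "card Z \<le> Suc (card Z0)" "\<forall>x\<in>Z0. h' x = 0"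
    using Rolle_finite_zeros[OF der Suc.prems(2)] by blast
  have inj: "inj_on (\<lambda>b. b - \<beta>) B1" by (auto simp: inj_on_def)
  have "c (b - \<beta> + \<beta>) * (b - \<beta>) = 0" if "b \<in> B1" for b
  proof (rule Suc.hyps(1)[where B="(\<lambda>b. b - \<beta>) ` B1" and Z=Z0 and c="\<lambda>b. c (b + \<beta>) * b"])
    show "m = card ((\<lambda>b. b - \<beta>) ` B1)" "finite ((\<lambda>b. b - \<beta>) ` B1)"
      using B inj by (auto simp: card_image)
    show "card ((\<lambda>b. b - \<beta>) ` B1) \<le> card Z0"
      using B inj Z0(2) Suc.hyps(2) Suc.prems(3) by (simp add: card_image)
    show "\<forall>x\<in>Z0. (\<Sum>b\<in>(\<lambda>b. b - \<beta>) ` B1. c (b + \<beta>) * b * exp (b * x)) = 0"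
      using Z0(3) by (simp add: sum.reindex[OF inj] h'_def algebra_simps)
  qed (use Z0 that in auto)
  then have c1: "\<forall>b\<in>B1. c b = 0" using B(2) by auto
  obtain z where "z \<in> Z" using Suc.prems Suc.hyps(2) by fastforce
  then have "c \<beta> * exp (\<beta> * z) = 0" using Suc.prems(4) c1 B by auto
  then show ?case by simp
qed

text \<open>The mixture density divided by the standard normal density, as a function of the data point.\<close>
definition mixture :: "nat \<Rightarrow> (nat \<Rightarrow> real) \<Rightarrow> (nat \<Rightarrow> real) \<Rightarrow> real \<Rightarrow> real" where
  "mixture J tau mu x = (\<Sum>j<J. tau j * exp (mu j * x - (mu j)\<^sup>2 / 2))"

definition mixture_deriv :: "nat \<Rightarrow> (nat \<Rightarrow> real) \<Rightarrow> (nat \<Rightarrow> real) \<Rightarrow> real \<Rightarrow> real" where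
  "mixture_deriv J tau mu x = (\<Sum>j<J. tau j * mu j * exp (mu j * x - (mu j)\<^sup>2 / 2))"

definition mass_at :: "nat \<Rightarrow> (nat \<Rightarrow> real) \<Rightarrow> (nat \<Rightarrow> real) \<Rightarrow> real \<Rightarrow> real" where
  "mass_at J tau mu b = (\<Sum>j<J. tau j * (if mu j = b then 1 else 0))"

lemma sum_regroup_by_value:
  fixes f :: "'a \<Rightarrow> real" and g :: "'b \<Rightarrow> real"
  assumes "finite P" "finite B" "\<And>j. j \<in> P \<Longrightarrow> e j \<in> B"
  shows "(\<Sum>j\<in>P. f j * g (e j)) = (\<Sum>b\<in>B. (\<Sum>j\<in>P. f j * (if e j = b then 1 else 0)) * g b)"
proof -
  have "(\<Sum>b\<in>B. (\<Sum>j\<in>P. f j * (if e j = b then 1 else 0)) * g b)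
      = (\<Sum>j\<in>P. \<Sum>b\<in>B. f j * (if e j = b then g b else 0))"
    by (subst sum.swap) (auto simp: sum_distrib_right intro!: sum.cong)
  also have "\<dots> = (\<Sum>j\<in>P. f j * g (e j))"
    using assms by (auto simp: sum_distrib_left[symmetric] intro!: sum.cong)
  finally show ?thesis by simp
qed

lemma param_space_J_pos: "(tau, mu) \<in> param_space J \<Longrightarrow> 0 < J"
  by (cases J) (auto simp: param_space_def)

lemma param_space_nonempty: "0 < J \<Longrightarrow> param_space J \<noteq> {}"
proof -
  assume "0 < J"
  then have "((\<lambda>j. if j < J then 1 / real J else 0), (\<lambda>_. 0)) \<in> param_space J"
    by (auto simp: param_space_def)
  then show ?thesis by blast
qed

lemma mixture_pos: "(tau, mu) \<in> param_space J \<Longrightarrow> 0 < mixture J tau mu x"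
  unfolding mixture_def using param_space_J_pos[of tau mu J]
  by (intro sum_pos) (auto simp: param_space_def)

lemma has_real_derivative_mixture:
  "(mixture J tau mu has_real_derivative mixture_deriv J tau mu x) (at x)"
  unfolding mixture_def mixture_deriv_def
  by (auto intro!: derivative_eq_intros simp: algebra_simps)

lemma sum_mass_at:
  "finite B \<Longrightarrow> (\<And>j. j < J \<Longrightarrow> mu j \<in> B) \<Longrightarrow> (\<Sum>b\<in>B. mass_at J tau mu b) = (\<Sum>j<J. tau j)"
  using sum_regroup_by_value[of "{..<J}" B mu tau "\<lambda>_. 1"] unfolding mass_at_def by simp

lemma mass_at_eq_0: "b \<notin> mu ` {..<J} \<Longrightarrow> mass_at J tau mu b = 0"
  unfolding mass_at_def by (auto intro!: sum.neutral)

lemma mixture_as_exp_sum: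
  assumes "finite B" "\<And>j. j < J \<Longrightarrow> mu j \<in> B"
  shows "mixture J tau mu x = (\<Sum>b\<in>B. exp (- b\<^sup>2 / 2) * mass_at J tau mu b * exp (b * x))"
proof -
  have "mixture J tau mu x = (\<Sum>j<J. tau j * exp (mu j * x - (mu j)\<^sup>2 / 2))"
    by (simp add: mixture_def)
  also have "\<dots> = (\<Sum>b\<in>B. mass_at J tau mu b * exp (b * x - b\<^sup>2 / 2))"
    unfolding mass_at_def using assms
    by (intro sum_regroup_by_value[of _ _ _ _ "\<lambda>b. exp (b * x - b\<^sup>2 / 2)"]) auto
  also have "\<dots> = (\<Sum>b\<in>B. exp (- b\<^sup>2 / 2) * mass_at J tau mu b * exp (b * x))"
    by (intro sum.cong refl) (simp add: algebra_simps flip: exp_add)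
  finally show ?thesis .
qed

lemma mixture_cross_eq_everywhere:
  assumes "finite Z" "J * J \<le> card Z"
    and "\<forall>x\<in>Z. mixture_deriv J tau mu x * mixture J s v x = mixture J tau mu x * mixture_deriv J s v x"
  shows "mixture_deriv J tau mu x * mixture J s v x = mixture J tau mu x * mixture_deriv J s v x"
proof -
  define P where "P = {..<J} \<times> {..<J}"
  define e where "e p = mu (fst p) + v (snd p)" for p
  define F where "F p = tau (fst p) * s (snd p) * (mu (fst p) - v (snd p)) *
     exp (- (mu (fst p))\<^sup>2 / 2 - (v (snd p))\<^sup>2 / 2)" for p
  define C where "C b = (\<Sum>p\<in>P. F p * (if e p = b then 1 else 0))" for b
  have fin: "finite P" "finite (e ` P)" unfolding P_def by auto
  have exp_sum: "mixture_deriv J tau mu x * mixture J s v x - mixture J tau mu x * mixture_deriv J s v x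
      = (\<Sum>b\<in>e ` P. C b * exp (b * x))" for x
  proof -
    have "mixture_deriv J tau mu x * mixture J s v x - mixture J tau mu x * mixture_deriv J s v x
        = (\<Sum>p\<in>P. F p * exp (e p * x))"
      unfolding mixture_deriv_def mixture_def P_def F_def e_def sum_product sum.cartesian_product
        sum_subtractf[symmetric]
      by (intro sum.cong refl) (auto simp: algebra_simps simp flip: exp_add)
    also have "\<dots> = (\<Sum>b\<in>e ` P. C b * exp (b * x))"
      unfolding C_def using fin by (intro sum_regroup_by_value) auto
    finally show ?thesis .
  qed
  have card: "card (e ` P) \<le> card Z"
    using card_image_le[of P e] assms(2) by (simp add: P_def card_cartesian_product)
  have "\<forall>x\<in>Z. (\<Sum>b\<in>e ` P. C b * exp (b * x)) = 0"
    using assms(3) by (simp flip: exp_sum)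
  then have "C b = 0" if "b \<in> e ` P" for b
    using exp_sum_coeff_eq_0[OF fin(2) assms(1) card _ that] by blast
  then show ?thesis using exp_sum[of x] by simp
qed

lemma mixture_proportional:
  assumes P: "(s, v) \<in> param_space J"
    and "\<And>x. mixture_deriv J tau mu x * mixture J s v x = mixture J tau mu x * mixture_deriv J s v x"
  shows "mixture J tau mu x = mixture J tau mu 0 / mixture J s v 0 * mixture J s v x"
proof -
  have "\<forall>y. DERIV (\<lambda>x. mixture J tau mu x / mixture J s v x) y :> 0"
  proof
    fix y
    have "DERIV (\<lambda>x. mixture J tau mu x / mixture J s v x) y :>
      (mixture_deriv J tau mu y * mixture J s v y - mixture J tau mu y * mixture_deriv J s v y)
        / (mixture J s v y * mixture J s v y)"
      using mixture_pos[OF P, of y]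
      by (intro DERIV_divide has_real_derivative_mixture) auto
    then show "DERIV (\<lambda>x. mixture J tau mu x / mixture J s v x) y :> 0"
      using assms(2)[of y] by simp
  qed
  then have "mixture J tau mu x / mixture J s v x = mixture J tau mu 0 / mixture J s v 0"
    by (rule DERIV_isconst_all)
  then show ?thesis using mixture_pos[OF P, of x] by (simp add: field_simps)
qed

text \<open>Both sides are exponential sums with at most 2J frequencies, so agreement at 2J points
  forces equal coefficients; equal total weights then force the factor to be 1.\<close>
lemma mass_at_eq_if_mixture_proportional:
  assumes P1: "(tau, mu) \<in> param_space J" and P2: "(s, v) \<in> param_space J"
    and proportional: "\<And>x. mixture J tau mu x = c * mixture J s v x"
  shows "mass_at J s v b = mass_at J tau mu b"
proof -
  define B where "B = mu ` {..<J} \<union> v ` {..<J}"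
  have finB: "finite B" unfolding B_def by auto
  define D where "D b = exp (- b\<^sup>2 / 2) * (mass_at J tau mu b - c * mass_at J s v b)" for b
  have cardB: "card B \<le> card (real ` {..<2 * J})"
    using card_Un_le[of "mu ` {..<J}" "v ` {..<J}"] card_image_le[of "{..<J}" mu]
      card_image_le[of "{..<J}" v] by (simp add: B_def card_image)
  have "(\<Sum>b\<in>B. D b * exp (b * x)) = mixture J tau mu x - c * mixture J s v x" for x
    using mixture_as_exp_sum[OF finB, of J mu tau x] mixture_as_exp_sum[OF finB, of J v s x]
    by (auto simp: B_def D_def sum_distrib_left sum_subtractf[symmetric] algebra_simps
        intro!: sum.cong)
  then have "D b = 0" if "b \<in> B" for b
    using exp_sum_coeff_eq_0[OF finB _ cardB _ that] proportional by simp
  then have mass_eq: "mass_at J tau mu b = c * mass_at J s v b" if "b \<in> B" for b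
    using that by (simp add: D_def)
  have "1 = (\<Sum>b\<in>B. mass_at J tau mu b)"
    using sum_mass_at[OF finB, of J mu tau] P1 by (auto simp: B_def param_space_def)
  also have "\<dots> = c * (\<Sum>b\<in>B. mass_at J s v b)"
    using mass_eq by (simp add: sum_distrib_left)
  also have "(\<Sum>b\<in>B. mass_at J s v b) = 1"
    using sum_mass_at[OF finB, of J v s] P2 by (auto simp: B_def param_space_def)
  finally have "c = 1" by simp
  then show ?thesis
    using mass_eq mass_at_eq_0[of b mu J tau] mass_at_eq_0[of b v J s]
    by (cases "b \<in> B") (auto simp: B_def)
qed

lemma locations_subset_if_mass_at_eq:
  assumes P1: "(tau, mu) \<in> param_space J" and P2: "(s, v) \<in> param_space J"
    and eq: "\<forall>k<J. mass_at J s v (mu k) = mass_at J tau mu (mu k)"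
    and "j < J"
  shows "v j \<in> mu ` {..<J}"
proof -
  define B where "B = mu ` {..<J}"
  have "(\<Sum>j<J. s j * (if v j \<in> B then 1 else 0)) = (\<Sum>b\<in>B. mass_at J s v b)"
    unfolding mass_at_def
    by (subst sum.swap) (auto simp: sum_distrib_left[symmetric] B_def intro!: sum.cong)
  also have "\<dots> = (\<Sum>b\<in>B. mass_at J tau mu b)"
    using eq by (auto simp: B_def intro!: sum.cong)
  also have "\<dots> = (\<Sum>j<J. s j)"
    using sum_mass_at[of B J mu tau] P1 P2 by (simp add: B_def param_space_def)
  finally have "(\<Sum>j<J. s j * (1 - (if v j \<in> B then 1 else 0))) = 0"
    by (simp add: sum_subtractf algebra_simps)
  moreover have "\<forall>j<J. 0 < s j" using P2 by (simp add: param_space_def)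
  ultimately have "\<forall>j\<in>{..<J}. s j * (1 - (if v j \<in> B then 1 else 0)) = 0"
    by (subst sum_nonneg_eq_0_iff[symmetric]) auto
  then show ?thesis using \<open>j < J\<close> P2 by (force simp: B_def param_space_def split: if_splits)
qed

lemma mixture_eq_if_mass_at_eq:
  assumes P1: "(tau, mu) \<in> param_space J" and P2: "(s, v) \<in> param_space J"
    and eq: "\<forall>k<J. mass_at J s v (mu k) = mass_at J tau mu (mu k)"
  shows "mixture J s v x = mixture J tau mu x"
proof -
  have fin: "finite (mu ` {..<J})" by simp
  show ?thesis
    using mixture_as_exp_sum[OF fin, of J v s x] mixture_as_exp_sum[OF fin, of J mu tau x]
      locations_subset_if_mass_at_eq[OF P1 P2 eq] eq
    by (auto intro!: sum.cong)
qed

definition loglik :: "nat \<Rightarrow> nat \<Rightarrow> (nat \<Rightarrow> real) \<Rightarrow> (nat \<Rightarrow> real) \<Rightarrow> (nat \<Rightarrow> real) \<Rightarrow> real" where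
  "loglik n J tau mu z = (\<Sum>i<n. ln (mixture J tau mu (z i)))"

definition max_loglik :: "nat \<Rightarrow> nat \<Rightarrow> (nat \<Rightarrow> real) \<Rightarrow> real" where
  "max_loglik n J z = Sup ((\<lambda>(tau, mu). loglik n J tau mu z) ` param_space J)"

lemma std_normal_mixture_eq:
  "(\<Sum>j<J. tau j * std_normal_density (x - mu j)) = std_normal_density x * mixture J tau mu x"
  unfolding mixture_def sum_distrib_left
proof (intro sum.cong refl)
  fix j
  have e: "- (x - mu j)\<^sup>2 / 2 = - x\<^sup>2 / 2 + (mu j * x - (mu j)\<^sup>2 / 2)"
    by (simp add: power2_eq_square field_simps)
  show "tau j * std_normal_density (x - mu j)
      = std_normal_density x * (tau j * exp (mu j * x - (mu j)\<^sup>2 / 2))"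
    unfolding std_normal_density_def e exp_add by simp
qed

lemma Qmix_eq_loglik:
  assumes "(tau, mu) \<in> param_space J"
  shows "Qmix n J tau mu z = - (\<Sum>i<n. ln (std_normal_density (z i))) - loglik n J tau mu z"
proof -
  have "Qmix n J tau mu z = - (\<Sum>i<n. ln (std_normal_density (z i)) + ln (mixture J tau mu (z i)))"
    unfolding Qmix_def std_normal_mixture_eq using mixture_pos[OF assms]
    by (intro arg_cong[where f=uminus] sum.cong refl ln_mult_pos) (auto simp: normal_density_pos)
  then show ?thesis by (simp add: loglik_def sum.distrib)
qed

lemma global_minimizers_iff:
  "(tau, mu) \<in> global_minimizers n J z \<longleftrightarrow>
   (tau, mu) \<in> param_space J \<and> (\<forall>(s, v) \<in> param_space J. loglik n J s v z \<le> loglik n J tau mu z)"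
proof -
  have "Qmix n J tau mu z \<le> Qmix n J s v z \<longleftrightarrow> loglik n J s v z \<le> loglik n J tau mu z"
    if "(tau, mu) \<in> param_space J" "(s, v) \<in> param_space J" for s v
    using that by (simp add: Qmix_eq_loglik)
  then show ?thesis unfolding global_minimizers_def by blast
qed

lemma mixture_le_exp:
  assumes "(tau, mu) \<in> param_space J"
  shows "mixture J tau mu x \<le> exp (x\<^sup>2 / 2)"
proof -
  have "mixture J tau mu x \<le> (\<Sum>j<J. tau j * exp (x\<^sup>2 / 2))"
    unfolding mixture_def
  proof (intro sum_mono mult_left_mono)
    fix j assume "j \<in> {..<J}"
    then show "0 \<le> tau j" using assms by (auto simp: param_space_def less_imp_le)
    have "mu j * x - (mu j)\<^sup>2 / 2 \<le> x\<^sup>2 / 2"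
      using sum_squares_ge_zero[of "mu j - x" 0] by (simp add: power2_eq_square algebra_simps)
    then show "exp (mu j * x - (mu j)\<^sup>2 / 2) \<le> exp (x\<^sup>2 / 2)" by simp
  qed
  also have "\<dots> = exp (x\<^sup>2 / 2)"
    using assms by (simp add: param_space_def flip: sum_distrib_right)
  finally show ?thesis .
qed

lemma loglik_le_sum_squares:
  assumes "(tau, mu) \<in> param_space J"
  shows "loglik n J tau mu z \<le> (\<Sum>i<n. (z i)\<^sup>2 / 2)"
  unfolding loglik_def
proof (intro sum_mono)
  fix i
  have "ln (mixture J tau mu (z i)) \<le> ln (exp ((z i)\<^sup>2 / 2))"
    using mixture_le_exp[OF assms] mixture_pos[OF assms] by (subst ln_le_cancel_iff) auto
  then show "ln (mixture J tau mu (z i)) \<le> (z i)\<^sup>2 / 2" by simp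
qed

lemma bdd_above_loglik: "bdd_above ((\<lambda>(tau, mu). loglik n J tau mu z) ` S)" if "S \<subseteq> param_space J"
  using that by (intro bdd_aboveI[of _ "\<Sum>i<n. (z i)\<^sup>2 / 2"]) (auto intro: loglik_le_sum_squares)

lemma loglik_le_max_loglik: "(tau, mu) \<in> param_space J \<Longrightarrow> loglik n J tau mu z \<le> max_loglik n J z"
  unfolding max_loglik_def by (rule cSup_upper[OF _ bdd_above_loglik]) force+

lemma max_loglik_le:
  "param_space J \<noteq> {} \<Longrightarrow> (\<And>tau mu. (tau, mu) \<in> param_space J \<Longrightarrow> loglik n J tau mu z \<le> c)
    \<Longrightarrow> max_loglik n J z \<le> c"
  unfolding max_loglik_def by (rule cSup_least) auto

lemma max_loglik_eq_loglik:
  assumes "(tau, mu) \<in> global_minimizers n J z"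
  shows "max_loglik n J z = loglik n J tau mu z"
proof (rule antisym)
  have P: "(tau, mu) \<in> param_space J"
    and le: "\<And>s v. (s, v) \<in> param_space J \<Longrightarrow> loglik n J s v z \<le> loglik n J tau mu z"
    using assms unfolding global_minimizers_iff by auto
  then show "max_loglik n J z \<le> loglik n J tau mu z"
    by (intro max_loglik_le) auto
  show "loglik n J tau mu z \<le> max_loglik n J z" by (rule loglik_le_max_loglik[OF P])
qed

text \<open>Each exponential lies above its tangent line at the score, so the weighted sum does too.\<close>
lemma ln_mixture_tangent:
  assumes "(tau, mu) \<in> param_space J"
  shows "mixture_deriv J tau mu y / mixture J tau mu y * (x - y)
      \<le> ln (mixture J tau mu x) - ln (mixture J tau mu y)"
proof -
  define A where "A = mixture J tau mu y"
  define s where "s = mixture_deriv J tau mu y / A"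
  define d where "d = x - y"
  define w where "w j = tau j * exp (mu j * y - (mu j)\<^sup>2 / 2)" for j
  have A: "0 < A" using mixture_pos[OF assms] A_def by simp
  have "mixture J tau mu x = (\<Sum>j<J. w j * exp (mu j * d))"
    unfolding mixture_def w_def d_def by (intro sum.cong refl) (simp add: algebra_simps flip: exp_add)
  also have "\<dots> \<ge> (\<Sum>j<J. w j * (exp (s * d) * (1 + (mu j - s) * d)))"
  proof (intro sum_mono mult_left_mono)
    fix j assume "j \<in> {..<J}"
    then show "0 \<le> w j" using assms by (auto simp: w_def param_space_def less_imp_le)
    have "exp (s * d) * (1 + (mu j - s) * d) \<le> exp (s * d) * exp ((mu j - s) * d)"
      by (intro mult_left_mono exp_ge_add_one_self) auto
    then show "exp (s * d) * (1 + (mu j - s) * d) \<le> exp (mu j * d)"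
      by (simp add: algebra_simps flip: exp_add)
  qed
  also have "(\<Sum>j<J. w j * (exp (s * d) * (1 + (mu j - s) * d))) =
      exp (s * d) * ((\<Sum>j<J. w j) + d * ((\<Sum>j<J. w j * mu j) - s * (\<Sum>j<J. w j)))"
    by (simp add: sum_distrib_left sum_distrib_right sum.distrib sum_subtractf algebra_simps)
  also have "(\<Sum>j<J. w j) = A" unfolding A_def mixture_def w_def ..
  also have "(\<Sum>j<J. w j * mu j) = s * A"
    unfolding s_def using A by (simp add: mixture_deriv_def w_def algebra_simps)
  finally have "exp (s * d) * A \<le> mixture J tau mu x" by simp
  then have "ln (exp (s * d) * A) \<le> ln (mixture J tau mu x)"
    using A mixture_pos[OF assms, of x] by (subst ln_le_cancel_iff) auto
  then show ?thesis using A by (simp add: ln_mult A_def s_def d_def)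
qed

lemma convex_on_ln_mixture:
  "(tau, mu) \<in> param_space J \<Longrightarrow> convex_on UNIV (\<lambda>x. ln (mixture J tau mu x))"
  by (rule pos_convex_function[OF convex_UNIV ln_mixture_tangent])

lemma loglik_fun_upd:
  assumes "i < n"
  shows "loglik n J tau mu (z(i := x))
      = (\<Sum>l\<in>{..<n} - {i}. ln (mixture J tau mu (z l))) + ln (mixture J tau mu x)"
  unfolding loglik_def using assms
  by (subst sum.remove[of _ i]) (auto simp: add.commute intro!: sum.cong)

text \<open>A supremum of convex functions is convex.\<close>
lemma convex_on_max_loglik:
  assumes "i < n" "param_space J \<noteq> {}"
  shows "convex_on UNIV (\<lambda>y. max_loglik n J (z(i := y)))"
proof (rule convex_onI)
  fix t x y :: real assume t: "0 < t" "t < 1"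
  show "max_loglik n J (z(i := (1 - t) *\<^sub>R x + t *\<^sub>R y))
      \<le> (1 - t) * max_loglik n J (z(i := x)) + t * max_loglik n J (z(i := y))"
  proof (rule max_loglik_le[OF assms(2)])
    fix tau mu assume P: "(tau, mu) \<in> param_space J"
    have "loglik n J tau mu (z(i := (1 - t) *\<^sub>R x + t *\<^sub>R y))
        \<le> (1 - t) * loglik n J tau mu (z(i := x)) + t * loglik n J tau mu (z(i := y))"
      using convex_onD[OF convex_on_ln_mixture[OF P], of t x y] t
      by (simp add: loglik_fun_upd[OF assms(1)] algebra_simps)
    also have "\<dots> \<le> (1 - t) * max_loglik n J (z(i := x)) + t * max_loglik n J (z(i := y))"
      using t by (intro add_mono mult_left_mono loglik_le_max_loglik[OF P]) auto
    finally show "loglik n J tau mu (z(i := (1 - t) *\<^sub>R x + t *\<^sub>R y)) \<le> \<dots>" .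
  qed
qed simp

lemma score_subgradient:
  assumes "(tau, mu) \<in> global_minimizers n J z" "i < n"
  shows "max_loglik n J z + mixture_deriv J tau mu (z i) / mixture J tau mu (z i) * (x - z i)
      \<le> max_loglik n J (z(i := x))"
proof -
  have P: "(tau, mu) \<in> param_space J" using assms global_minimizers_iff by auto
  have "max_loglik n J z = (\<Sum>l\<in>{..<n} - {i}. ln (mixture J tau mu (z l)))
      + ln (mixture J tau mu (z i))"
    using max_loglik_eq_loglik[OF assms(1)] loglik_fun_upd[OF assms(2), of J tau mu z "z i"] by simp
  then have "max_loglik n J z + mixture_deriv J tau mu (z i) / mixture J tau mu (z i) * (x - z i)
      \<le> loglik n J tau mu (z(i := x))"
    using ln_mixture_tangent[OF P, of "z i" x] by (simp add: loglik_fun_upd[OF assms(2)])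
  also have "\<dots> \<le> max_loglik n J (z(i := x))" by (rule loglik_le_max_loglik[OF P])
  finally show ?thesis .
qed

text \<open>Points where g has two distinct subgradients. Slopes are rational and the subgradient
  inequalities are only tested at rational points, so that membership is a countable
  combination of measurable conditions when g depends measurably on a parameter.\<close>
definition rat_kinks :: "(real \<Rightarrow> real) \<Rightarrow> real set" where
  "rat_kinks g = {y. \<exists>q1 q2 :: rat. q1 < q2 \<and> (\<forall>r :: rat.
      g y + of_rat q1 * (of_rat r - y) \<le> g (of_rat r) \<and>
      g y + of_rat q2 * (of_rat r - y) \<le> g (of_rat r))}"

text \<open>Two kinks sharing the same pair of slopes q1 < q2 would, with a rational point r between
  them, violate the monotonicity of the slopes of g; so each pair of slopes has at most one kink.\<close>
lemma countable_rat_kinks: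
  fixes g :: "real \<Rightarrow> real"
  assumes convex: "convex_on UNIV g"
  shows "countable (rat_kinks g)"
proof -
  define T where "T q = {y. \<forall>r :: rat. g y + of_rat (fst q) * (of_rat r - y) \<le> g (of_rat r) \<and>
      g y + of_rat (snd q) * (of_rat r - y) \<le> g (of_rat r)}" for q :: "rat \<times> rat"
  have sub: "rat_kinks g \<subseteq> (\<Union>q\<in>{q. fst q < snd q}. T q)"
  proof
    fix y assume "y \<in> rat_kinks g"
    then obtain q1 q2 where "q1 < q2" "y \<in> T (q1, q2)"
      unfolding rat_kinks_def T_def by auto
    then show "y \<in> (\<Union>q\<in>{q. fst q < snd q}. T q)" by force
  qed
  have no_two: False if q: "fst q < snd q" and y: "y0 < y1" "y0 \<in> T q" "y1 \<in> T q" for q y0 y1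
  proof -
    obtain r where r: "r \<in> \<rat>" "y0 < r" "r < y1" using Rats_dense_in_real[OF y(1)] by blast
    then obtain rr where rr: "r = of_rat rr" by (auto elim: Rats_cases)
    have "of_rat (snd q) \<le> (g r - g y0) / (r - y0)"
      using y(2) rr r by (auto simp: T_def pos_le_divide_eq algebra_simps)
    also have "\<dots> = (g y0 - g r) / (y0 - r)"
      by (metis minus_diff_eq minus_divide_divide)
    also have "\<dots> \<le> (g r - g y1) / (r - y1)"
      using convex_on_slope_le[OF convex UNIV_I UNIV_I r(2,3)] by linarith
    also have "\<dots> = (g y1 - g r) / (y1 - r)"
      by (metis minus_diff_eq minus_divide_divide)
    also have "\<dots> \<le> of_rat (fst q)"
      using y(3) rr r by (auto simp: T_def pos_divide_le_eq algebra_simps)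
    finally show False using q by (simp add: of_rat_less_eq)
  qed
  have T_subset: "T q \<subseteq> {y}" if "fst q < snd q" "y \<in> T q" for q y
  proof
    fix y' assume "y' \<in> T q"
    then show "y' \<in> {y}"
      using no_two[OF that(1), of y y'] no_two[OF that(1), of y' y] that(2)
      by (cases y y' rule: linorder_cases) auto
  qed
  have "countable (T q)" if "fst q < snd q" for q
  proof (cases "T q = {}")
    case False
    then obtain y where "y \<in> T q" by blast
    then show ?thesis by (intro countable_subset[OF T_subset[OF that]] countable_finite) auto
  qed simp
  then have "countable (\<Union>q\<in>{q. fst q < snd q}. T q)" by (intro countable_UN) auto
  then show ?thesis by (rule countable_subset[OF sub])
qed

lemma rat_kink_if_subgradients:
  fixes g :: "real \<Rightarrow> real"
  assumes "a < b"
    and a: "\<And>x. g y + a * (x - y) \<le> g x" and b: "\<And>x. g y + b * (x - y) \<le> g x"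
  shows "y \<in> rat_kinks g"
proof -
  have mid: "g y + c * (x - y) \<le> g x" if "a \<le> c" "c \<le> b" for c x
  proof (cases "x \<le> y")
    case True
    then have "c * (x - y) \<le> a * (x - y)" using that by (intro mult_right_mono_neg) auto
    then show ?thesis using a[of x] by simp
  next
    case False
    then have "c * (x - y) \<le> b * (x - y)" using that by (intro mult_right_mono) auto
    then show ?thesis using b[of x] by simp
  qed
  obtain q1 where q1: "a < of_rat q1" "of_rat q1 < b"
    using of_rat_dense[OF \<open>a < b\<close>] by blast
  obtain q2 where q2: "of_rat q1 < (of_rat q2 :: real)" "of_rat q2 < b"
    using of_rat_dense[OF q1(2)] by blast
  have "q1 < q2" using q2(1) by (simp add: of_rat_less)
  then show ?thesis
    unfolding rat_kinks_def using q1 q2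
    by (intro CollectI exI[of _ q1] exI[of _ q2] conjI allI mid) auto
qed

lemma equal_scores_if_no_rat_kink:
  assumes m1: "(tau, mu) \<in> global_minimizers n J z" and m2: "(s, v) \<in> global_minimizers n J z"
    and "i < n" and no_kink: "z i \<notin> rat_kinks (\<lambda>y. max_loglik n J (z(i := y)))"
  shows "mixture_deriv J tau mu (z i) / mixture J tau mu (z i)
       = mixture_deriv J s v (z i) / mixture J s v (z i)"
proof -
  let ?g = "\<lambda>y. max_loglik n J (z(i := y))"
  have subgradient: "?g (z i) + mixture_deriv J t m (z i) / mixture J t m (z i) * (x - z i) \<le> ?g x"
    if "(t, m) \<in> global_minimizers n J z" for t m x
    using score_subgradient[OF that \<open>i < n\<close>] by simp
  show ?thesis
    using rat_kink_if_subgradients[of _ _ ?g "z i", OF _ subgradient[OF m1] subgradient[OF m2]]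
      rat_kink_if_subgradients[of _ _ ?g "z i", OF _ subgradient[OF m2] subgradient[OF m1]]
      no_kink
    by (meson linorder_neqE_linordered_idom)
qed

lemma global_minimizer_if_mass_at_eq:
  assumes m: "(tau, mu) \<in> global_minimizers n J z" and P: "(s, v) \<in> param_space J"
    and eq: "\<forall>k<J. mass_at J s v (mu k) = mass_at J tau mu (mu k)"
  shows "(s, v) \<in> global_minimizers n J z"
proof -
  have "(tau, mu) \<in> param_space J" using m global_minimizers_iff by blast
  then have "loglik n J s v z = loglik n J tau mu z"
    unfolding loglik_def using mixture_eq_if_mass_at_eq[OF _ P eq] by simp
  then show ?thesis using m P unfolding global_minimizers_iff by simp
qed

text \<open>Without kinks all maximisers share the score at every data point, i.e. the Wronskian of
  their mixtures vanishes at n \<ge> J * J distinct points.\<close>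
lemma mass_at_eq_if_global_minimizers:
  assumes m1: "(tau, mu) \<in> global_minimizers n J z" and m2: "(s, v) \<in> global_minimizers n J z"
    and no_kinks: "\<forall>i<n. z i \<notin> rat_kinks (\<lambda>y. max_loglik n J (z(i := y)))"
    and inj: "inj_on z {..<n}" and "J * J \<le> n"
  shows "mass_at J s v b = mass_at J tau mu b"
proof -
  have P1: "(tau, mu) \<in> param_space J" and P2: "(s, v) \<in> param_space J"
    using m1 m2 global_minimizers_iff by blast+
  have "mixture_deriv J tau mu x * mixture J s v x = mixture J tau mu x * mixture_deriv J s v x"
    if x: "x \<in> z ` {..<n}" for x
  proof -
    obtain i where "i < n" "x = z i" using x by auto
    then show ?thesis
      using equal_scores_if_no_rat_kink[OF m1 m2 \<open>i < n\<close> no_kinks[rule_format]]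
        mixture_pos[OF P1, of x] mixture_pos[OF P2, of x]
      by (simp add: field_simps)
  qed
  then have "mixture_deriv J tau mu x * mixture J s v x = mixture J tau mu x * mixture_deriv J s v x"
    for x
    using \<open>J * J \<le> n\<close> card_image[OF inj] by (intro mixture_cross_eq_everywhere[of "z ` {..<n}"]) auto
  then show ?thesis
    by (rule mass_at_eq_if_mixture_proportional[OF P1 P2 mixture_proportional[OF P2]])
qed

lemma global_minimizers_eq:
  assumes m: "(tau, mu) \<in> global_minimizers n J z"
    and no_kinks: "\<forall>i<n. z i \<notin> rat_kinks (\<lambda>y. max_loglik n J (z(i := y)))"
    and inj: "inj_on z {..<n}" and "J * J \<le> n"
  shows "global_minimizers n J z =
    {(s, v) \<in> param_space J. \<forall>k<J.
       (\<Sum>j<J. s j * (if v j = mu k then 1 else 0)) = (\<Sum>j<J. tau j * (if mu j = mu k then 1 else 0))}"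
  using mass_at_eq_if_global_minimizers[OF m _ no_kinks inj \<open>J * J \<le> n\<close>]
    global_minimizer_if_mass_at_eq[OF m] global_minimizers_iff
  unfolding mass_at_def[symmetric] by auto

definition rat_params :: "nat \<Rightarrow> ((nat \<Rightarrow> real) \<times> (nat \<Rightarrow> real)) set" where
  "rat_params J = {(tau, mu) \<in> param_space J. (\<forall>j. tau j \<in> \<rat>) \<and> (\<forall>j. mu j \<in> \<rat>)}"

lemma countable_rat_params: "countable (rat_params J)"
proof -
  define R where "R = {g :: nat \<Rightarrow> real. (\<forall>j. g j \<in> \<rat>) \<and> (\<forall>j\<ge>J. g j = 0)}"
  have "R \<subseteq> (\<lambda>h j. if j < J then h j else 0) ` (PiE {..<J} (\<lambda>_. \<rat>))"
  proof
    fix g assume g: "g \<in> R"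
    then have "g = (\<lambda>j. if j < J then restrict g {..<J} j else 0)"
      unfolding R_def by (auto simp: fun_eq_iff)
    moreover have "restrict g {..<J} \<in> PiE {..<J} (\<lambda>_. \<rat>)" using g unfolding R_def by auto
    ultimately show "g \<in> (\<lambda>h j. if j < J then h j else 0) ` (PiE {..<J} (\<lambda>_. \<rat>))" by blast
  qed
  moreover have "countable (PiE {..<J} (\<lambda>_. \<rat> :: real set))"
    by (intro countable_PiE) (auto simp: Rats_def)
  ultimately have "countable R" by (rule countable_subset[OF _ countable_image])
  then have "countable (R \<times> R)" by (intro countable_SIGMA)
  moreover have "rat_params J \<subseteq> R \<times> R"
  proof
    fix p assume "p \<in> rat_params J"
    then show "p \<in> R \<times> R" by (cases p) (simp add: rat_params_def param_space_def R_def)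
  qed
  ultimately show ?thesis by (rule countable_subset[rotated])
qed

lemma loglik_tendsto:
  assumes P: "(tau, mu) \<in> param_space J"
    and "\<And>j. j < J \<Longrightarrow> (\<lambda>k. T k j) \<longlonglongrightarrow> tau j"
    and "\<And>j. j < J \<Longrightarrow> (\<lambda>k. M k j) \<longlonglongrightarrow> mu j"
  shows "(\<lambda>k. loglik n J (T k) (M k) z) \<longlonglongrightarrow> loglik n J tau mu z"
  unfolding loglik_def
proof (intro tendsto_sum tendsto_ln)
  fix i
  show "(\<lambda>k. mixture J (T k) (M k) (z i)) \<longlonglongrightarrow> mixture J tau mu (z i)"
    unfolding mixture_def using assms by (intro tendsto_sum tendsto_intros) auto
  show "mixture J tau mu (z i) \<noteq> 0" using mixture_pos[OF P] by (metis less_irrefl)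
qed

lemma rational_approximation:
  fixes a :: real
  shows "\<exists>r. (\<forall>k. r k \<in> \<rat>) \<and> (\<forall>k. a < r k) \<and> r \<longlonglongrightarrow> a"
proof -
  have "\<forall>k. \<exists>r. r \<in> \<rat> \<and> a < r \<and> r < a + inverse (real (Suc k))"
  proof
    fix k
    show "\<exists>r. r \<in> \<rat> \<and> a < r \<and> r < a + inverse (real (Suc k))"
      using Rats_dense_in_real[of a "a + inverse (real (Suc k))"] by auto
  qed
  then obtain r where r: "\<forall>k. r k \<in> \<rat> \<and> a < r k \<and> r k < a + inverse (real (Suc k))"
    by (rule choice[THEN exE])
  have upper: "(\<lambda>k. a + inverse (real (Suc k))) \<longlonglongrightarrow> a"
    using tendsto_add[OF tendsto_const LIMSEQ_inverse_real_of_nat, of a] by simp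
  have bounds: "\<forall>\<^sub>F k in sequentially. a \<le> r k"
    "\<forall>\<^sub>F k in sequentially. r k \<le> a + inverse (real (Suc k))"
    using r by (auto intro!: always_eventually less_imp_le)
  have "r \<longlonglongrightarrow> a" by (rule tendsto_sandwich[OF bounds tendsto_const upper])
  then show ?thesis using r by blast
qed

text \<open>Rounding the weights up to rationals and renormalising stays inside the simplex.\<close>
lemma rat_params_approx:
  assumes P: "(tau, mu) \<in> param_space J"
  obtains T M where "\<And>k. (T k, M k) \<in> rat_params J"
    "\<And>j. j < J \<Longrightarrow> (\<lambda>k. T k j) \<longlonglongrightarrow> tau j" "\<And>j. j < J \<Longrightarrow> (\<lambda>k. M k j) \<longlonglongrightarrow> mu j"
proof -
  obtain rt where rt: "\<forall>j. (\<forall>k. rt j k \<in> \<rat>) \<and> (\<forall>k. tau j < rt j k) \<and> rt j \<longlonglongrightarrow> tau j"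
    using choice[of "\<lambda>j r. (\<forall>k. r k \<in> \<rat>) \<and> (\<forall>k. tau j < r k) \<and> r \<longlonglongrightarrow> tau j"]
      rational_approximation by blast
  obtain rm where rm: "\<forall>j. (\<forall>k. rm j k \<in> \<rat>) \<and> (\<forall>k. mu j < rm j k) \<and> rm j \<longlonglongrightarrow> mu j"
    using choice[of "\<lambda>j r. (\<forall>k. r k \<in> \<rat>) \<and> (\<forall>k. mu j < r k) \<and> r \<longlonglongrightarrow> mu j"]
      rational_approximation by blast
  have rt1: "rt j k \<in> \<rat>" and rt2: "tau j < rt j k" and rt3: "rt j \<longlonglongrightarrow> tau j"
    and rm1: "rm j k \<in> \<rat>" and rm2: "rm j \<longlonglongrightarrow> mu j" for j k
    using rt rm by auto
  have tau: "\<And>j. j < J \<Longrightarrow> 0 < tau j" "(\<Sum>j<J. tau j) = 1"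
    using P by (auto simp: param_space_def)
  define S where "S k = (\<Sum>l<J. rt l k)" for k
  have S: "0 < S k" for k
    unfolding S_def using param_space_J_pos[OF P] tau(1) rt2
    by (intro sum_pos) (auto intro: less_trans)
  define T where "T k j = (if j < J then rt j k / S k else 0)" for k j
  define M where "M k j = (if j < J then rm j k else 0)" for k j
  have "(T k, M k) \<in> rat_params J" for k
  proof -
    have "0 < T k j" if "j < J" for j
      using that S[of k] tau(1)[OF that] rt2[of j k] by (simp add: T_def)
    moreover have "(\<Sum>j<J. T k j) = 1"
      using S[of k] by (simp add: T_def S_def flip: sum_divide_distrib)
    moreover have "\<forall>j. T k j \<in> \<rat>" "\<forall>j. M k j \<in> \<rat>"
      unfolding T_def M_def S_def using rt1 rm1 by (auto intro!: Rats_divide Rats_sum)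
    moreover have "\<forall>j\<ge>J. T k j = 0 \<and> M k j = 0" by (simp add: T_def M_def)
    ultimately show ?thesis by (simp add: rat_params_def param_space_def)
  qed
  moreover have "(\<lambda>k. T k j) \<longlonglongrightarrow> tau j" if "j < J" for j
  proof -
    have "S \<longlonglongrightarrow> 1"
      unfolding S_def using tau(2) tendsto_sum[of "{..<J}" rt tau sequentially] rt3 by simp
    then have "(\<lambda>k. rt j k / S k) \<longlonglongrightarrow> tau j / 1" by (intro tendsto_divide rt3) auto
    then show ?thesis using that by (simp add: T_def)
  qed
  moreover have "(\<lambda>k. M k j) \<longlonglongrightarrow> mu j" if "j < J" for j
    using that rm2 by (simp add: M_def)
  ultimately show ?thesis using that by blast
qed

lemma max_loglik_eq_SUP_rat_params:
  assumes "0 < J"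
  shows "max_loglik n J z = (SUP (tau, mu)\<in>rat_params J. loglik n J tau mu z)"
proof (rule antisym)
  have sub: "rat_params J \<subseteq> param_space J" by (auto simp: rat_params_def)
  have "((\<lambda>j. if j < J then 1 / real J else 0), (\<lambda>_. 0)) \<in> rat_params J"
    using assms by (simp add: rat_params_def param_space_def)
  then have ne: "rat_params J \<noteq> {}" by blast
  show "max_loglik n J z \<le> (SUP (tau, mu)\<in>rat_params J. loglik n J tau mu z)"
  proof (rule max_loglik_le[OF param_space_nonempty[OF assms]])
    fix tau mu assume P: "(tau, mu) \<in> param_space J"
    obtain T M where TM: "\<And>k. (T k, M k) \<in> rat_params J"
      "\<And>j. j < J \<Longrightarrow> (\<lambda>k. T k j) \<longlonglongrightarrow> tau j" "\<And>j. j < J \<Longrightarrow> (\<lambda>k. M k j) \<longlonglongrightarrow> mu j"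
      using rat_params_approx[OF P] by blast
    have "loglik n J (T k) (M k) z \<le> (SUP (tau, mu)\<in>rat_params J. loglik n J tau mu z)" for k
      using cSUP_upper[OF TM(1)[of k] bdd_above_loglik[OF sub]] by (simp only: case_prod_conv)
    then show "loglik n J tau mu z \<le> (SUP (tau, mu)\<in>rat_params J. loglik n J tau mu z)"
      by (intro LIMSEQ_le_const2[OF loglik_tendsto[OF P TM(2,3)]]) auto
  qed
  show "(SUP (tau, mu)\<in>rat_params J. loglik n J tau mu z) \<le> max_loglik n J z"
  proof (rule cSUP_least[OF ne])
    fix p assume "p \<in> rat_params J"
    then show "(case p of (tau, mu) \<Rightarrow> loglik n J tau mu z) \<le> max_loglik n J z"
      using sub by (cases p) (simp add: loglik_le_max_loglik subsetD)
  qed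
qed

lemma borel_measurable_max_loglik:
  assumes "0 < J" and h: "\<And>l. l < n \<Longrightarrow> (\<lambda>x. h x l) \<in> borel_measurable M"
  shows "(\<lambda>x. max_loglik n J (h x)) \<in> borel_measurable M"
proof -
  have "(\<lambda>x. ln (mixture J tau mu (h x l))) \<in> borel_measurable M" if "l < n" for tau mu l
  proof -
    have [measurable]: "(\<lambda>x. h x l) \<in> borel_measurable M" using h[OF that] .
    show ?thesis unfolding mixture_def by measurable
  qed
  then have "(\<lambda>x. loglik n J tau mu (h x)) \<in> borel_measurable M" for tau mu
    unfolding loglik_def by (intro borel_measurable_sum) simp
  then show ?thesis
    unfolding max_loglik_eq_SUP_rat_params[OF assms(1)]
    by (intro borel_measurable_cSUP countable_rat_params) (auto intro: bdd_above_loglik simp: rat_params_def)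
qed

lemma pred_rat_kink:
  assumes "0 < J" "i < n" and N: "sets N = sets borel"
  shows "Measurable.pred (PiM {..<n} (\<lambda>_. N)) (\<lambda>z. z i \<in> rat_kinks (\<lambda>y. max_loglik n J (z(i := y))))"
proof -
  have component: "(\<lambda>z. z l) \<in> borel_measurable (PiM {..<n} (\<lambda>_. N))" if "l < n" for l
    using that by (simp add: measurable_cong_sets[OF refl N[symmetric]] measurable_component_singleton)
  have upd: "(\<lambda>z. max_loglik n J (z(i := c))) \<in> borel_measurable (PiM {..<n} (\<lambda>_. N))" for c
    using component by (intro borel_measurable_max_loglik[OF \<open>0 < J\<close>]) (simp add: fun_upd_apply)
  have "(\<lambda>z. max_loglik n J z + a * (c - z i)) \<in> borel_measurable (PiM {..<n} (\<lambda>_. N))" for a c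
    using component[OF \<open>i < n\<close>] component
    by (intro borel_measurable_add borel_measurable_times borel_measurable_diff
        borel_measurable_max_loglik[OF \<open>0 < J\<close>]) auto
  then have "Measurable.pred (PiM {..<n} (\<lambda>_. N))
      (\<lambda>z. max_loglik n J z + a * (c - z i) \<le> max_loglik n J (z(i := c)))" for a c
    using upd by (simp add: pred_def borel_measurable_le)
  then show ?thesis
    unfolding rat_kinks_def mem_Collect_eq fun_upd_triv
    by (intro pred_intros_countable pred_intros_logic) (auto simp: pred_def)
qed

text \<open>Fubini: integrate out coordinate i first; each slice is a countable, hence null, set.\<close>
lemma AE_PiM_if_countable_slices:
  fixes N :: "real measure"
  assumes "sigma_finite_measure N" and null: "\<And>C. countable C \<Longrightarrow> C \<in> null_sets N"
    and "finite I" "i \<in> I" and P: "Measurable.pred (PiM I (\<lambda>_. N)) P"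
    and slices: "\<And>x. x \<in> space (PiM (I - {i}) (\<lambda>_. N)) \<Longrightarrow> countable {y. P (x(i := y))}"
  shows "AE z in PiM I (\<lambda>_. N). \<not> P z"
proof -
  interpret product_sigma_finite "\<lambda>_. N"
    using assms(1) by (simp add: product_sigma_finite_def)
  define S where "S = {z \<in> space (PiM I (\<lambda>_. N)). P z}"
  have I: "insert i (I - {i}) = I" using \<open>i \<in> I\<close> by auto
  have S: "S \<in> sets (PiM (insert i (I - {i})) (\<lambda>_. N))" using P I by (simp add: S_def pred_def)
  have "emeasure (PiM I (\<lambda>_. N)) S = (\<integral>\<^sup>+ z. indicator S z \<partial>PiM (insert i (I - {i})) (\<lambda>_. N))"
    using S I by simp
  also have "\<dots> = (\<integral>\<^sup>+ x. (\<integral>\<^sup>+ y. indicator S (x(i := y)) \<partial>N) \<partial>PiM (I - {i}) (\<lambda>_. N))"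
    using S \<open>finite I\<close> by (intro product_nn_integral_insert) auto
  also have "\<dots> = (\<integral>\<^sup>+ x. 0 \<partial>PiM (I - {i}) (\<lambda>_. N))"
  proof (rule nn_integral_cong)
    fix x assume x: "x \<in> space (PiM (I - {i}) (\<lambda>_. N))"
    have C: "{y. x(i := y) \<in> S} \<in> null_sets N"
      by (rule null, rule countable_subset[OF _ slices[OF x]]) (auto simp: S_def)
    have "(\<integral>\<^sup>+ y. indicator S (x(i := y)) \<partial>N) = (\<integral>\<^sup>+ y. indicator {y. x(i := y) \<in> S} y \<partial>N)"
      by (intro nn_integral_cong) (simp add: indicator_def)
    also have "\<dots> = emeasure N {y. x(i := y) \<in> S}" using C by (intro nn_integral_indicator) auto
    also have "\<dots> = 0" using C by auto
    finally show "(\<integral>\<^sup>+ y. indicator S (x(i := y)) \<partial>N) = 0" .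
  qed
  finally have "emeasure (PiM I (\<lambda>_. N)) S = 0" by simp
  then show ?thesis
    using AE_iff_measurable[of S _ "\<lambda>z. \<not> P z"] S I by (simp add: S_def)
qed

lemma AE_no_rat_kinks:
  fixes N :: "real measure"
  assumes "sigma_finite_measure N" "sets N = sets borel" "\<And>C. countable C \<Longrightarrow> C \<in> null_sets N"
    and "0 < J"
  shows "AE z in PiM {..<n} (\<lambda>_. N). \<forall>i<n. z i \<notin> rat_kinks (\<lambda>y. max_loglik n J (z(i := y)))"
proof -
  have "AE z in PiM {..<n} (\<lambda>_. N). z i \<notin> rat_kinks (\<lambda>y. max_loglik n J (z(i := y)))"
    if "i \<in> {..<n}" for i
  proof (rule AE_PiM_if_countable_slices[OF assms(1,3)])
    show "Measurable.pred (PiM {..<n} (\<lambda>_. N)) (\<lambda>z. z i \<in> rat_kinks (\<lambda>y. max_loglik n J (z(i := y))))"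
      using that by (intro pred_rat_kink[OF \<open>0 < J\<close> _ assms(2)]) simp
    show "countable {y. (x(i := y)) i \<in> rat_kinks (\<lambda>y'. max_loglik n J ((x(i := y))(i := y')))}" for x
      using that convex_on_max_loglik[of i n J x] param_space_nonempty[OF \<open>0 < J\<close>]
      by (simp add: countable_rat_kinks)
  qed (use that in auto)
  then have "AE z in PiM {..<n} (\<lambda>_. N).
      \<forall>i\<in>{..<n}. z i \<notin> rat_kinks (\<lambda>y. max_loglik n J (z(i := y)))"
    by (intro AE_ball_countable') auto
  then show ?thesis by eventually_elim auto
qed

lemma AE_inj_on_coordinates:
  fixes N :: "real measure" and n :: nat
  assumes "sigma_finite_measure N" "sets N = sets borel" "\<And>C. countable C \<Longrightarrow> C \<in> null_sets N"
  shows "AE z in PiM {..<n} (\<lambda>_. N). inj_on z {..<n}"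
proof -
  have component: "(\<lambda>z. z l) \<in> borel_measurable (PiM {..<n} (\<lambda>_. N))" if "l < n" for l
    using that by (simp add: measurable_cong_sets[OF refl assms(2)[symmetric]] measurable_component_singleton)
  have "AE z in PiM {..<n} (\<lambda>_. N). z i \<noteq> z j" if "i \<in> {..<n}" "j \<in> {..<n}" "i \<noteq> j" for i j
  proof (rule AE_PiM_if_countable_slices[OF assms(1,3)])
    show "Measurable.pred (PiM {..<n} (\<lambda>_. N)) (\<lambda>z. z i = z j)"
      using that component by (simp add: pred_def borel_measurable_eq)
    show "countable {y. (x(i := y)) i = (x(i := y)) j}" for x
      using that by (auto intro: countable_subset[of _ "{x j}"])
  qed (use that in auto)
  then have "AE z in PiM {..<n} (\<lambda>_. N). \<forall>i\<in>{..<n}. \<forall>j\<in>{..<n}. i \<noteq> j \<longrightarrow> z i \<noteq> z j"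
    by (intro AE_ball_countable' AE_impI) auto
  then show ?thesis by eventually_elim (auto simp: inj_on_def)
qed

lemma countable_null_sets_density:
  assumes "f \<in> borel_measurable lborel" "countable C"
  shows "C \<in> null_sets (density lborel f)"
proof -
  have C: "C \<in> null_sets lborel" by (rule countable_imp_null_set_lborel[OF assms(2)])
  then have "AE x in lborel. x \<in> C \<longrightarrow> f x = 0"
    using AE_not_in[OF C] by eventually_elim auto
  then show ?thesis using assms(1) null_setsD2[OF C] by (subst null_sets_density_iff) auto
qed

theorem corollary1:
  fixes f :: "real \<Rightarrow> real" and n J :: nat
  assumes f_meas: "f \<in> borel_measurable lborel"
    and f_nonneg: "\<And>x. 0 \<le> f x"
    and f_prob: "(\<integral>\<^sup>+ x. ennreal (f x) \<partial>lborel) = 1"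
    and J_le: "real J \<le> sqrt (real n)"
  shows "AE z in PiM {..<n} (\<lambda>_. density lborel (\<lambda>x. ennreal (f x))).
           \<forall>tau mu. (tau, mu) \<in> global_minimizers n J z \<longrightarrow>
             global_minimizers n J z =
               {(s, v) \<in> param_space J. \<forall>k<J.
                  (\<Sum>j<J. s j * (if v j = mu k then 1 else 0)) =
                  (\<Sum>j<J. tau j * (if mu j = mu k then 1 else 0))}"
proof (cases "J = 0")
  case True
  then show ?thesis by (simp add: global_minimizers_def param_space_def)
next
  case False
  let ?N = "density lborel (\<lambda>x. ennreal (f x))"
  have "prob_space ?N"
    using f_meas f_prob by (intro prob_spaceI) (simp add: emeasure_density)
  then have N: "sigma_finite_measure ?N" by (rule prob_space_imp_sigma_finite)
  have null: "countable C \<Longrightarrow> C \<in> null_sets ?N" for C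
    using f_meas by (intro countable_null_sets_density) auto
  have "real (J * J) \<le> real n"
    using mult_mono[OF J_le J_le] by simp
  then have JJ: "J * J \<le> n" by linarith
  have "AE z in PiM {..<n} (\<lambda>_. ?N).
      (\<forall>i<n. z i \<notin> rat_kinks (\<lambda>y. max_loglik n J (z(i := y)))) \<and> inj_on z {..<n}"
    using AE_no_rat_kinks[OF N _ null] AE_inj_on_coordinates[OF N _ null] False by simp
  then show ?thesis
  proof eventually_elim
    case (elim z)
    then show ?case by (intro allI impI global_minimizers_eq[OF _ _ _ JJ]) auto
  qed
qed

end
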